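(* If $L$ is a regular language, then ${\rm bdir}(L)$ is regular.
   Context: For $w=a_1\cdots a_{2n}$ of even length, ${\rm bdir}(w)=a_1a_{2n}a_2a_{2n-1}\cdots a_na_{n+1}$; for $w=a_1\cdots a_{2n+1}$ of odd length, ${\rm bdir}(w)=a_1a_{2n+1}a_2a_{2n}\cdots a_na_{n+2}a_{n+1}$. ${\rm bdir}(L)=\{{\rm bdir}(w):w\in L\}$. *)

theory Defs
  imports Main
begin

function bdir :: "'a list \<Rightarrow> 'a list" where
  "bdir w = (if length w \<le> 1 then w
             else hd w # last w # bdir (butlast (tl w)))"
  by auto
termination by (relation "measure length") auto

declare bdir.simps [simp del]

definition bdir_lang :: "'a list set \<Rightarrow> 'a list set" where
  "bdir_lang L = bdir ` L"

definition regular :: "'a set \<Rightarrow> 'a list set \<Rightarrow> bool" where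
  "regular \<Sigma> L \<longleftrightarrow> finite \<Sigma> \<and> L \<subseteq> lists \<Sigma> \<and>
     (\<exists>(Q :: nat set) (\<delta> :: nat \<Rightarrow> 'a \<Rightarrow> nat) q0 F.
        finite Q \<and> q0 \<in> Q \<and> F \<subseteq> Q \<and>
        (\<forall>q\<in>Q. \<forall>a\<in>\<Sigma>. \<delta> q a \<in> Q) \<and>
        L = {w \<in> lists \<Sigma>. foldl \<delta> q0 w \<in> F})"

lemma "bdir [1::nat,2,3,4,5] = [1,5,2,4,3]" "bdir [1::nat,2,3,4] = [1,4,2,3]"
  by (simp_all add: bdir.simps)

end

theory Submission
  imports Defs
begin

(* A word w = x m y is read by bdir in the order x y bdir(m): the
   first letter of each pair extends w from the front, the second from the back.
   Given a DFA (Q, delta, q0, F) for L, a DFA for bdir(L) therefore keeps a triple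
   (p, S, b): p is the state reached by delta on the front part read so far, S is
   the set of states from which the back part read so far leads into F (computed
   backwards, by preimages), and b records whether the next letter belongs to the
   back part.  The word is accepted iff p is in S at the end.  Its state space
   Q x Pow Q x bool is finite. *)

lemma foldl_closed:
  assumes cl: "\<forall>q\<in>Q. \<forall>a\<in>\<Sigma>. \<delta> q a \<in> Q" and "q \<in> Q" and "w \<in> lists \<Sigma>"
  shows "foldl \<delta> q w \<in> Q"
  using assms(2,3) by (induction w arbitrary: q) (use cl in auto)

lemma foldl_simulation:
  assumes cl: "\<forall>q\<in>Q. \<forall>a\<in>\<Sigma>. \<delta> q a \<in> Q"
    and sim: "\<And>q a. q \<in> Q \<Longrightarrow> a \<in> \<Sigma> \<Longrightarrow> \<delta>' (h q) a = h (\<delta> q a)"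
    and "q \<in> Q" and "w \<in> lists \<Sigma>"
  shows "foldl \<delta>' (h q) w = h (foldl \<delta> q w)"
  using assms(3,4)
proof (induction w arbitrary: q)
  case (Cons a w)
  then have "\<delta> q a \<in> Q" using cl by auto
  with Cons show ?case by (simp add: sim)
qed simp

text \<open>Regularity may be witnessed by a DFA whose states have an arbitrary type: a
  finite state set can be renamed injectively into the natural numbers.\<close>
lemma regular_from_dfa:
  fixes Q :: "'q set" and \<delta> :: "'q \<Rightarrow> 'a \<Rightarrow> 'q"
  assumes fS: "finite \<Sigma>" and fQ: "finite Q" and q0: "q0 \<in> Q" and FQ: "F \<subseteq> Q"
    and cl: "\<forall>q\<in>Q. \<forall>a\<in>\<Sigma>. \<delta> q a \<in> Q"
    and L: "L = {w \<in> lists \<Sigma>. foldl \<delta> q0 w \<in> F}"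
  shows "regular \<Sigma> L"
proof -
  obtain e :: "'q \<Rightarrow> nat" where e: "inj_on e Q"
    using fQ finite_imp_inj_to_nat_seg by blast
  define d where "d = inv_into Q e"
  have de: "d (e q) = q" if "q \<in> Q" for q
    using e that by (simp add: d_def)
  define \<delta>' where "\<delta>' = (\<lambda>i a. e (\<delta> (d i) a))"
  have run: "foldl \<delta>' (e q0) w = e (foldl \<delta> q0 w)" if "w \<in> lists \<Sigma>" for w
    using foldl_simulation[OF cl _ q0 that, of \<delta>' e] by (simp add: \<delta>'_def de)
  have accept: "foldl \<delta>' (e q0) w \<in> e ` F \<longleftrightarrow> foldl \<delta> q0 w \<in> F" if "w \<in> lists \<Sigma>" for w
    using run[OF that] foldl_closed[OF cl q0 that] inj_on_image_mem_iff[OF e] FQ by simp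
  have "L = {w \<in> lists \<Sigma>. foldl \<delta>' (e q0) w \<in> e ` F}"
    using L accept by auto
  moreover have "\<forall>q\<in>e ` Q. \<forall>a\<in>\<Sigma>. \<delta>' q a \<in> e ` Q"
    using cl de by (auto simp: \<delta>'_def)
  ultimately show ?thesis unfolding regular_def
    using fS fQ q0 FQ L
    by (intro conjI exI[of _ "e ` Q"] exI[of _ \<delta>'] exI[of _ "e q0"] exI[of _ "e ` F"]) auto
qed

lemma bdir_short: "length w \<le> 1 \<Longrightarrow> bdir w = w"
  by (subst bdir.simps) simp

lemma bdir_Cons_snoc: "bdir (x # m @ [y]) = x # y # bdir m"
  by (subst bdir.simps) simp

lemma outside_in_induct [case_names Nil Single Outer]:
  assumes "P []" and "\<And>x. P [x]" and "\<And>x m y. P m \<Longrightarrow> P (x # m @ [y])"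
  shows "P w"
proof (induction w rule: length_induct)
  case (1 w)
  consider "w = []" | x where "w = [x]" | x m y where "w = x # m @ [y]"
    by (metis append_butlast_last_id list.exhaust)
  then show ?case
    by cases (use assms 1 in auto)
qed

lemma set_bdir: "set (bdir w) = set w"
  by (induction w rule: outside_in_induct) (auto simp: bdir_short bdir_Cons_snoc)

text \<open>An explicit right inverse of bdir: it shows that bdir is onto.\<close>
fun unbdir :: "'a list \<Rightarrow> 'a list" where
  "unbdir (x # y # r) = x # unbdir r @ [y]"
| "unbdir v = v"

lemma bdir_unbdir: "bdir (unbdir v) = v"
  by (induction v rule: unbdir.induct) (auto simp: bdir_short bdir_Cons_snoc)

lemma set_unbdir: "set (unbdir v) = set v"
  by (induction v rule: unbdir.induct) auto

lemma bdir_lang_transfer: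
  assumes PQ: "\<And>w. w \<in> lists \<Sigma> \<Longrightarrow> Q (bdir w) \<longleftrightarrow> P w"
  shows "bdir_lang {w \<in> lists \<Sigma>. P w} = {v \<in> lists \<Sigma>. Q v}"
proof (intro set_eqI iffI)
  fix v assume "v \<in> bdir_lang {w \<in> lists \<Sigma>. P w}"
  then obtain w where "w \<in> lists \<Sigma>" "P w" "v = bdir w"
    by (auto simp: bdir_lang_def)
  then show "v \<in> {v \<in> lists \<Sigma>. Q v}"
    using PQ set_bdir by (metis in_lists_conv_set mem_Collect_eq)
next
  fix v assume v: "v \<in> {v \<in> lists \<Sigma>. Q v}"
  then have "unbdir v \<in> lists \<Sigma>" using set_unbdir by (metis in_lists_conv_set mem_Collect_eq)
  with v PQ show "v \<in> bdir_lang {w \<in> lists \<Sigma>. P w}"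
    unfolding bdir_lang_def by (metis (mono_tags, lifting) bdir_unbdir image_eqI mem_Collect_eq)
qed

definition bdir_delta ::
    "'q set \<Rightarrow> ('q \<Rightarrow> 'a \<Rightarrow> 'q) \<Rightarrow> 'q \<times> 'q set \<times> bool \<Rightarrow> 'a \<Rightarrow> 'q \<times> 'q set \<times> bool" where
  "bdir_delta Q \<delta> = (\<lambda>(p, S, b) a.
     if b then (p, {q \<in> Q. \<delta> q a \<in> S}, False) else (\<delta> p a, S, True))"

lemma bdir_delta_closed:
  assumes "\<forall>q\<in>Q. \<forall>a\<in>\<Sigma>. \<delta> q a \<in> Q"
  shows "\<forall>s\<in>Q \<times> Pow Q \<times> UNIV. \<forall>a\<in>\<Sigma>. bdir_delta Q \<delta> s a \<in> Q \<times> Pow Q \<times> UNIV"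
  using assms by (auto simp: bdir_delta_def)

lemma bdir_delta_run:
  assumes cl: "\<forall>q\<in>Q. \<forall>a\<in>\<Sigma>. \<delta> q a \<in> Q"
    and "p \<in> Q" and "w \<in> lists \<Sigma>"
  shows "(case foldl (bdir_delta Q \<delta>) (p, S, False) (bdir w) of (p', S', _) \<Rightarrow> p' \<in> S')
         \<longleftrightarrow> foldl \<delta> p w \<in> S"
  using assms(2,3)
proof (induction w arbitrary: p S rule: outside_in_induct)
  case (Outer x m y)
  then have letters: "x \<in> \<Sigma>" "y \<in> \<Sigma>" "m \<in> lists \<Sigma>" and px: "\<delta> p x \<in> Q"
    using cl by auto
  have "foldl \<delta> (\<delta> p x) m \<in> Q"
    using foldl_closed[OF cl px letters(3)] .
  with Outer.IH[OF px letters(3), of "{q \<in> Q. \<delta> q y \<in> S}"] show ?case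
    by (simp add: bdir_Cons_snoc bdir_delta_def)
qed (auto simp: bdir_short bdir_delta_def)

theorem mainTheorem15:
  fixes \<Sigma> :: "'a set" and L :: "'a list set"
  assumes "regular \<Sigma> L"
  shows "regular \<Sigma> (bdir_lang L)"
proof -
  from assms obtain Q :: "nat set" and \<delta> q0 F where
    fS: "finite \<Sigma>" and fQ: "finite Q" and q0: "q0 \<in> Q" and FQ: "F \<subseteq> Q"
    and cl: "\<forall>q\<in>Q. \<forall>a\<in>\<Sigma>. \<delta> q a \<in> Q"
    and L: "L = {w \<in> lists \<Sigma>. foldl \<delta> q0 w \<in> F}"
    unfolding regular_def by blast
  define X where "X = Q \<times> Pow Q \<times> (UNIV :: bool set)"
  define accept where "accept = {(p, S, b). (p, S, b) \<in> X \<and> p \<in> S}"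
  have "bdir_lang L = {v \<in> lists \<Sigma>. foldl (bdir_delta Q \<delta>) (q0, F, False) v \<in> accept}"
    unfolding L
  proof (rule bdir_lang_transfer)
    fix w assume w: "w \<in> lists \<Sigma>"
    have "bdir w \<in> lists \<Sigma>" using w set_bdir by (metis in_lists_conv_set)
    then have "foldl (bdir_delta Q \<delta>) (q0, F, False) (bdir w) \<in> X"
      using foldl_closed[OF bdir_delta_closed[OF cl]] q0 FQ by (simp add: X_def)
    then show "foldl (bdir_delta Q \<delta>) (q0, F, False) (bdir w) \<in> accept \<longleftrightarrow> foldl \<delta> q0 w \<in> F"
      using bdir_delta_run[OF cl q0 w, of F] by (auto simp: accept_def split: prod.splits)
  qed
  moreover have "finite X" "(q0, F, False) \<in> X" "accept \<subseteq> X"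
    using fQ q0 FQ by (auto simp: X_def accept_def)
  ultimately show ?thesis
    using regular_from_dfa[OF fS _ _ _ bdir_delta_closed[OF cl]] unfolding X_def by blast
qed

end
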